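(* Let $\mathscr{C}=\left\{\sum_{i=1}^{\infty} t_i 3^{-i} : t_i\in\{0,2\}\right\}$ be the middle-third Cantor set. Then \[\left[\left(\tfrac{8}{9}\right)^{3},\tfrac{8}{9}\right]\subseteq \mathscr{C}\cdot\mathscr{C}\cdot\mathscr{C}\cdot\mathscr{C}=\{abcd : a,b,c,d\in\mathscr{C}\}.\] *)

theory Defs
  imports "HOL-Analysis.Analysis"
begin

text \<open>The digit sequence is indexed from 0 here, digit \<open>t n\<close> having weight \<open>3^{-(n+1)}\<close>.\<close>
definition cantor_set :: "real set" where
  "cantor_set = {x. \<exists>t :: nat \<Rightarrow> real. (\<forall>i. t i \<in> {0, 2}) \<and>
                       x = (\<Sum>i. t i / 3 ^ (Suc i))}"

end

theory Submission
  imports Defs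
begin

text \<open>Let \<open>k \<ge> 3\<close> and \<open>(2/3)^k \<le> u \<le> 1\<close>. Run a nested-interval argument on the Cantor intervals of
  \<open>k\<close> factors, all inside \<open>[2/3, 1]\<close>. If intervals \<open>[c\<^sub>i, c\<^sub>i + 3h]\<close> have a product range
  containing \<open>u\<close>, cut the factors one at a time to an outer third \<open>[c, c + h]\<close> or \<open>[c + 2h, c + 3h]\<close>:
  the product ranges of the two thirds overlap, because \<open>(c + 2h) \<Prod> l\<^sub>j \<le> (c + h) \<Prod> (l\<^sub>j + h)\<close>
  follows from \<open>\<Prod> (l\<^sub>j + h) \<ge> (1 + (k - 1) h) \<Prod> l\<^sub>j\<close> (as \<open>l\<^sub>j \<le> 1\<close>) and \<open>(k - 1) c \<ge> 1\<close>
  (as \<open>c \<ge> 2/3\<close>). So \<open>u\<close> stays bracketed at every level, and the limit points of the chosen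
  intervals are Cantor points with product \<open>u\<close>. The theorem is the case \<open>k = 4\<close>, as
  \<open>(2/3)^4 \<le> (8/9)^3\<close>.\<close>

lemma prod_add_const_ge:
  fixes y :: "'a \<Rightarrow> real" and h :: real
  assumes "finite J" "0 \<le> h" "\<And>j. j \<in> J \<Longrightarrow> 0 \<le> y j \<and> y j \<le> 1"
  shows "(1 + card J * h) * prod y J \<le> (\<Prod>j\<in>J. y j + h)"
  using assms(1,3)
proof (induction J rule: finite_induct)
  case empty
  then show ?case by simp
next
  case (insert m J)
  have y: "0 \<le> y m" "y m \<le> 1" and P: "0 \<le> prod y J"
    using insert.prems by (auto intro: prod_nonneg)
  have "y m * (1 + (card J + 1) * h) \<le> (y m + h) * (1 + card J * h)"
  proof -
    have "y m * h \<le> h" using y \<open>0 \<le> h\<close> by (simp add: mult_left_le_one_le)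
    moreover have "0 \<le> card J * h * h" using \<open>0 \<le> h\<close> by simp
    ultimately show ?thesis by (simp add: algebra_simps)
  qed
  then have "y m * (1 + (card J + 1) * h) * prod y J \<le> (y m + h) * (1 + card J * h) * prod y J"
    using P by (rule mult_right_mono)
  then have "(1 + card (insert m J) * h) * prod y (insert m J)
      \<le> (y m + h) * ((1 + card J * h) * prod y J)"
    using insert.hyps by (simp add: mult_ac)
  also have "\<dots> \<le> (y m + h) * (\<Prod>j\<in>J. y j + h)"
    using insert y \<open>0 \<le> h\<close> by (intro mult_left_mono) auto
  also have "\<dots> = (\<Prod>j\<in>insert m J. y j + h)"
    using insert.hyps by simp
  finally show ?case .
qed

lemma middle_third_ranges_overlap:
  fixes l r :: "'a \<Rightarrow> real" and h x :: real
  assumes "finite J" "0 \<le> h" "1 \<le> card J * x"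
    and "\<And>j. j \<in> J \<Longrightarrow> 0 \<le> l j \<and> l j \<le> 1 \<and> l j + h \<le> r j"
  shows "(x + 2*h) * prod l J \<le> (x + h) * prod r J"
proof -
  have "0 < card J * x"
    using assms(3) by linarith
  then have "0 < x"
    by (simp add: zero_less_mult_iff)
  have "h \<le> h * (card J * x)"
    using assms(2,3) by (simp add: mult_le_cancel_left1)
  moreover have "0 \<le> h * (h * card J)"
    using assms(2) by simp
  ultimately have "x + 2*h \<le> (x + h) * (1 + card J * h)"
    by (simp add: algebra_simps)
  moreover have "0 \<le> prod l J"
    using assms(4) by (simp add: prod_nonneg)
  ultimately have "(x + 2*h) * prod l J \<le> (x + h) * ((1 + card J * h) * prod l J)"
    by (metis mult_right_mono mult.assoc)
  also have "\<dots> \<le> (x + h) * (\<Prod>j\<in>J. l j + h)"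
    using assms \<open>0 < x\<close> by (intro mult_left_mono prod_add_const_ge) auto
  also have "\<dots> \<le> (x + h) * prod r J"
    using assms \<open>0 < x\<close> by (intro mult_left_mono prod_mono) auto
  finally show ?thesis .
qed

lemma split_middle_third:
  fixes x h A B u :: real
  assumes "x * A \<le> u" "u \<le> (x + 3*h) * B" "(x + 2*h) * A \<le> (x + h) * B"
  shows "\<exists>e\<in>{0,2}. (x + e*h) * A \<le> u \<and> u \<le> (x + e*h + h) * B"
proof (cases "u \<le> (x + h) * B")
  case True
  then show ?thesis using assms by auto
next
  case False
  then show ?thesis using assms by (intro bexI[of _ 2]) (auto simp: algebra_simps)
qed

lemma split_box_coordinate:
  fixes l r :: "'a \<Rightarrow> real" and h u :: real
  assumes "finite I" "m \<in> I" "3 \<le> card I" "0 \<le> h"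
    and "2/3 \<le> l m" "r m = l m + 3*h"
    and "\<And>i. i \<in> I - {m} \<Longrightarrow> 0 \<le> l i \<and> l i \<le> 1 \<and> l i + h \<le> r i"
    and "prod l I \<le> u" "u \<le> prod r I"
  shows "\<exists>e\<in>{0,2}. prod (l(m := l m + e*h)) I \<le> u \<and> u \<le> prod (r(m := l m + e*h + h)) I"
proof -
  let ?A = "prod l (I - {m})" and ?B = "prod r (I - {m})"
  have remove_m: "prod f I = f m * prod f (I - {m})" for f :: "'a \<Rightarrow> real"
    using assms(1,2) by (rule prod.remove)
  have "1 \<le> card (I - {m}) * l m"
  proof -
    have "2 \<le> card (I - {m})"
      using assms(1-3) by (simp add: card_Diff_singleton)
    then have "2 * (2/3) \<le> card (I - {m}) * l m"
      using assms(5) by (intro mult_mono) auto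
    then show ?thesis by simp
  qed
  then have "(l m + 2*h) * ?A \<le> (l m + h) * ?B"
    using assms(1,4,7) by (intro middle_third_ranges_overlap) auto
  moreover have "l m * ?A \<le> u" "u \<le> (l m + 3*h) * ?B"
    using assms(6,8,9) by (simp_all add: remove_m[of l] remove_m[of r])
  ultimately obtain e where e: "e \<in> {0,2}" "(l m + e*h) * ?A \<le> u" "u \<le> (l m + e*h + h) * ?B"
    using split_middle_third by blast
  have "prod (f(m := v)) I = v * prod f (I - {m})" for f :: "'a \<Rightarrow> real" and v
    by (simp add: remove_m)
  with e show ?thesis by auto
qed

text \<open>Coordinates in \<open>S\<close> still have intervals of width \<open>3h\<close>, the others have already been cut
  to width \<open>h\<close>.\<close>
lemma refine_box:
  fixes c :: "'a \<Rightarrow> real" and h u :: real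
  assumes "finite I" "3 \<le> card I" "0 \<le> h" "S \<subseteq> I"
    and "\<And>i. i \<in> I \<Longrightarrow> 2/3 \<le> c i \<and> c i + (if i \<in> S then 3 else 1) * h \<le> 1"
    and "prod c I \<le> u" "u \<le> (\<Prod>i\<in>I. c i + (if i \<in> S then 3 else 1) * h)"
  shows "\<exists>e. (\<forall>i. e i \<in> {0,2}) \<and> (\<forall>i. i \<notin> S \<longrightarrow> e i = 0) \<and>
    (\<Prod>i\<in>I. c i + e i * h) \<le> u \<and> u \<le> (\<Prod>i\<in>I. c i + e i * h + h)"
proof -
  have "finite S"
    using assms(1,4) by (rule finite_subset[rotated])
  then show ?thesis
    using assms(4-)
  proof (induction S arbitrary: c rule: finite_induct)
    case empty
    then show ?case by (intro exI[of _ "\<lambda>_. 0"]) simp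
  next
    case (insert m S)
    let ?r = "\<lambda>i. c i + (if i \<in> insert m S then 3 else 1) * h"
    have "m \<in> I" "S \<subseteq> I"
      using insert.prems(1) by auto
    have c_m: "2/3 \<le> c m" "c m + 3*h \<le> 1"
      using insert.prems(2)[OF \<open>m \<in> I\<close>] by auto
    have "0 \<le> c i \<and> c i \<le> 1 \<and> c i + h \<le> ?r i" if "i \<in> I - {m}" for i
      using insert.prems(2)[of i] that assms(3) by (cases "i \<in> S") auto
    then obtain e\<^sub>m where e\<^sub>m: "e\<^sub>m \<in> {0,2}"
        "prod (c(m := c m + e\<^sub>m*h)) I \<le> u" "u \<le> prod (?r(m := c m + e\<^sub>m*h + h)) I"
      using split_box_coordinate[of I m h c ?r u, OF assms(1) \<open>m \<in> I\<close> assms(2,3) c_m(1)] insert.prems(3,4)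
      by auto
    define c' where "c' = c(m := c m + e\<^sub>m*h)"
    have r_update: "?r(m := c m + e\<^sub>m*h + h) = (\<lambda>i. c' i + (if i \<in> S then 3 else 1) * h)"
      using insert.hyps(2) by (auto simp: c'_def)
    have "2/3 \<le> c' i \<and> c' i + (if i \<in> S then 3 else 1) * h \<le> 1" if "i \<in> I" for i
      using insert.prems(2)[OF that] c_m insert.hyps(2) e\<^sub>m(1) assms(3)
      by (auto simp: c'_def)
    moreover have "prod c' I \<le> u" "u \<le> (\<Prod>i\<in>I. c' i + (if i \<in> S then 3 else 1) * h)"
      using e\<^sub>m(2,3) by (simp_all only: c'_def r_update)
    ultimately obtain e where e: "\<forall>i. e i \<in> {0,2}" "\<forall>i. i \<notin> S \<longrightarrow> e i = 0"
        "(\<Prod>i\<in>I. c' i + e i * h) \<le> u" "u \<le> (\<Prod>i\<in>I. c' i + e i * h + h)"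
      using insert.IH[OF \<open>S \<subseteq> I\<close>] by blast
    have "c' i + e i * h = c i + (e(m := e\<^sub>m)) i * h" for i
      using e(2) insert.hyps(2) by (auto simp: c'_def)
    then show ?case
      using e e\<^sub>m(1) by (intro exI[of _ "e(m := e\<^sub>m)"]) auto
  qed
qed

definition cantor_prefix :: "(nat \<Rightarrow> real) \<Rightarrow> nat \<Rightarrow> real" where
  "cantor_prefix t n = (\<Sum>j<n. t j / 3 ^ Suc j)"

lemma cantor_prefix_Suc: "cantor_prefix t (Suc n) = cantor_prefix t n + t n / 3 ^ Suc n"
  by (simp add: cantor_prefix_def)

lemma cantor_prefix_cong: "(\<And>j. j < n \<Longrightarrow> s j = t j) \<Longrightarrow> cantor_prefix s n = cantor_prefix t n"
  by (simp add: cantor_prefix_def)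

lemma cantor_prefix_first_digit_le:
  assumes "\<And>j. 0 \<le> t j"
  shows "t 0 / 3 \<le> cantor_prefix t (Suc n)"
proof (induction n)
  case 0
  then show ?case by (simp add: cantor_prefix_def)
next
  case (Suc n)
  have "0 \<le> t (Suc n) / 3 ^ Suc (Suc n)"
    using assms by simp
  with Suc show ?case
    unfolding cantor_prefix_Suc[of t "Suc n"] by linarith
qed

lemma cantor_prefix_add_width_le_1:
  assumes "\<And>j. t j \<in> {0,2}"
  shows "cantor_prefix t n + 1 / 3 ^ n \<le> 1"
proof (induction n)
  case 0
  then show ?case by (simp add: cantor_prefix_def)
next
  case (Suc n)
  have "t n \<le> 2" using assms[of n] by auto
  then have "t n / 3 ^ Suc n + 1 / 3 ^ Suc n \<le> 1 / 3 ^ n"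
    by (simp add: field_simps)
  with Suc show ?case by (simp add: cantor_prefix_Suc)
qed

lemma cantor_prefix_tendsto:
  assumes "\<And>j. t j \<in> {0,2}"
  shows "cantor_prefix t \<longlonglongrightarrow> (\<Sum>j. t j / 3 ^ Suc j)"
proof -
  have "summable (\<lambda>j. t j / 3 ^ Suc j)"
  proof (rule summableI_nonneg_bounded)
    show "0 \<le> t j / 3 ^ Suc j" for j
      using assms[of j] by auto
    show "(\<Sum>j<n. t j / 3 ^ Suc j) \<le> 1" for n
    proof -
      have "cantor_prefix t n + 1 / 3 ^ n \<le> 1"
        by (rule cantor_prefix_add_width_le_1) (rule assms)
      moreover have "0 \<le> 1 / (3::real) ^ n"
        by simp
      ultimately show ?thesis
        unfolding cantor_prefix_def by linarith
    qed
  qed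
  then show ?thesis
    unfolding cantor_prefix_def by (rule summable_LIMSEQ)
qed

text \<open>\<open>D j i\<close> is the \<open>j\<close>-th ternary digit of the \<open>i\<close>-th factor. Fixing the first digit to 2
  keeps every factor in \<open>[2/3, 1]\<close>.\<close>
definition cantor_bracket :: "'a set \<Rightarrow> real \<Rightarrow> nat \<Rightarrow> (nat \<Rightarrow> 'a \<Rightarrow> real) \<Rightarrow> bool" where
  "cantor_bracket I u n D \<longleftrightarrow> (\<forall>j i. D j i \<in> {0,2}) \<and> (\<forall>i. D 0 i = 2) \<and>
     (\<Prod>i\<in>I. cantor_prefix (\<lambda>j. D j i) n) \<le> u \<and>
     u \<le> (\<Prod>i\<in>I. cantor_prefix (\<lambda>j. D j i) n + 1 / 3 ^ n)"

lemma cantor_bracket_1: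
  assumes "(2/3) ^ card I \<le> u" "u \<le> 1"
  shows "cantor_bracket I u 1 (\<lambda>_ _. 2)"
  using assms by (simp add: cantor_bracket_def cantor_prefix_def)

lemma cantor_bracket_Suc:
  assumes "finite I" "3 \<le> card I" "cantor_bracket I u (Suc n) D"
  shows "\<exists>e. cantor_bracket I u (Suc (Suc n)) (D(Suc n := e))"
proof -
  define c where "c i = cantor_prefix (\<lambda>j. D j i) (Suc n)" for i
  define h :: real where "h = 1 / 3 ^ Suc (Suc n)"
  have digits: "D j i \<in> {0,2}" "D 0 i = 2" for j i
    using assms(3) by (auto simp: cantor_bracket_def)
  have width: "1 / 3 ^ Suc n = 3 * h"
    by (simp add: h_def)
  have lower: "2/3 \<le> c i" for i
  proof -
    have "0 \<le> D j i" for j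
      using digits(1)[of j i] by auto
    then show ?thesis
      using cantor_prefix_first_digit_le[of "\<lambda>j. D j i" n] digits(2)[of i] by (simp add: c_def)
  qed
  have upper: "c i + 3 * h \<le> 1" for i
    unfolding c_def width[symmetric] by (rule cantor_prefix_add_width_le_1) (rule digits(1))
  have bracket: "prod c I \<le> u" "u \<le> (\<Prod>i\<in>I. c i + 3 * h)"
    using assms(3) unfolding cantor_bracket_def c_def width[symmetric] by simp_all
  have "\<exists>e. (\<forall>i. e i \<in> {0,2}) \<and> (\<forall>i. i \<notin> I \<longrightarrow> e i = 0) \<and>
      (\<Prod>i\<in>I. c i + e i * h) \<le> u \<and> u \<le> (\<Prod>i\<in>I. c i + e i * h + h)"
  proof (rule refine_box[where I = I and S = I])
    show "0 \<le> h"
      by (simp add: h_def)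
  qed (use assms(1,2) lower upper bracket in auto)
  then obtain e where e: "\<forall>i. e i \<in> {0,2}"
      "(\<Prod>i\<in>I. c i + e i * h) \<le> u" "u \<le> (\<Prod>i\<in>I. c i + e i * h + h)"
    by blast
  have "cantor_prefix (\<lambda>j. (D(Suc n := e)) j i) (Suc n) = c i" for i
    unfolding c_def by (rule cantor_prefix_cong) simp
  then have prefix: "cantor_prefix (\<lambda>j. (D(Suc n := e)) j i) (Suc (Suc n)) = c i + e i * h" for i
    by (simp add: cantor_prefix_Suc h_def)
  have "cantor_bracket I u (Suc (Suc n)) (D(Suc n := e))"
    unfolding cantor_bracket_def prefix h_def[symmetric] using digits e by auto
  then show ?thesis
    by blast
qed

lemma cantor_bracket_all_levels:
  assumes "finite I" "3 \<le> card I" "(2/3) ^ card I \<le> u" "u \<le> 1"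
  obtains D where "\<And>n. cantor_bracket I u (Suc n) D"
proof -
  have "\<exists>F. \<forall>n. cantor_bracket I u (Suc n) (F n) \<and> (\<forall>j\<le>n. F (Suc n) j = F n j)"
  proof (rule dependent_nat_choice)
    show "\<exists>D. cantor_bracket I u (Suc 0) D"
      using cantor_bracket_1[OF assms(3,4)] by auto
  next
    fix D n
    assume "cantor_bracket I u (Suc n) D"
    then obtain e where "cantor_bracket I u (Suc (Suc n)) (D(Suc n := e))"
      using cantor_bracket_Suc[OF assms(1,2)] by blast
    moreover have "\<forall>j\<le>n. (D(Suc n := e)) j = D j"
      by simp
    ultimately show "\<exists>D'. cantor_bracket I u (Suc (Suc n)) D' \<and> (\<forall>j\<le>n. D' j = D j)"
      by blast
  qed
  then obtain F where F: "\<And>n. cantor_bracket I u (Suc n) (F n)"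
    and F_stable: "\<And>n j. j \<le> n \<Longrightarrow> F (Suc n) j = F n j"
    by blast
  have diagonal: "F n j = F j j" if "j \<le> n" for n j
    using that
  proof (induction n)
    case (Suc n)
    then show ?case
      by (cases "j = Suc n") (simp_all add: F_stable)
  qed simp
  have "cantor_bracket I u (Suc n) (\<lambda>j. F j j)" for n
  proof -
    have "cantor_prefix (\<lambda>j. F j j i) (Suc n) = cantor_prefix (\<lambda>j. F n j i) (Suc n)" for i
      by (rule cantor_prefix_cong) (metis diagonal less_Suc_eq_le)
    moreover have "F j j i \<in> {0,2}" "F 0 0 i = 2" for j i
      using F[of j] F[of 0] unfolding cantor_bracket_def by blast+
    ultimately show ?thesis
      using F[of n] unfolding cantor_bracket_def by simp
  qed
  then show thesis by (rule that)
qed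

lemma eq_prod_limit_if_bracketed:
  fixes a :: "nat \<Rightarrow> 'a \<Rightarrow> real"
  assumes "\<And>i. i \<in> I \<Longrightarrow> (\<lambda>n. a n i) \<longlonglongrightarrow> x i" "w \<longlonglongrightarrow> 0"
    and "\<And>n. prod (a n) I \<le> u" "\<And>n. u \<le> (\<Prod>i\<in>I. a n i + w n)"
  shows "u = prod x I"
proof (rule antisym)
  have "(\<lambda>n. \<Prod>i\<in>I. a n i + w n) \<longlonglongrightarrow> (\<Prod>i\<in>I. x i + 0)"
    using assms(1,2) by (intro tendsto_prod tendsto_add)
  then show "u \<le> prod x I"
    using assms(4) by (simp add: LIMSEQ_le_const)
  have "(\<lambda>n. prod (a n) I) \<longlonglongrightarrow> prod x I"
    using assms(1) by (intro tendsto_prod)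
  then show "prod x I \<le> u"
    using assms(3) by (simp add: LIMSEQ_le_const2)
qed

theorem interval_subset_cantor_products:
  assumes "finite I" "3 \<le> card I"
  shows "{(2/3) ^ card I .. 1} \<subseteq> {prod x I | x. \<forall>i\<in>I. x i \<in> cantor_set}"
proof
  fix u :: real
  assume "u \<in> {(2/3) ^ card I .. 1}"
  then obtain D where D: "\<And>n. cantor_bracket I u (Suc n) D"
    using cantor_bracket_all_levels[OF assms] by auto
  have digits: "D j i \<in> {0,2}" for j i
    using D[of 0] by (simp add: cantor_bracket_def)
  define x where "x i = (\<Sum>j. D j i / 3 ^ Suc j)" for i
  have "x i \<in> cantor_set" for i
    unfolding cantor_set_def x_def by (intro CollectI exI[of _ "\<lambda>j. D j i"] conjI allI digits refl)
  moreover have "u = prod x I"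
  proof (rule eq_prod_limit_if_bracketed)
    show "(\<lambda>n. cantor_prefix (\<lambda>j. D j i) (Suc n)) \<longlonglongrightarrow> x i" for i
      unfolding x_def using cantor_prefix_tendsto[of "\<lambda>j. D j i"] digits
      by (simp add: LIMSEQ_Suc)
    show "(\<lambda>n. 1 / 3 ^ Suc n :: real) \<longlonglongrightarrow> 0"
      using LIMSEQ_divide_realpow_zero[of 3 1] LIMSEQ_Suc by fastforce
    show "(\<Prod>i\<in>I. cantor_prefix (\<lambda>j. D j i) (Suc n)) \<le> u"
      "u \<le> (\<Prod>i\<in>I. cantor_prefix (\<lambda>j. D j i) (Suc n) + 1 / 3 ^ Suc n)" for n
      using D[of n] by (simp_all add: cantor_bracket_def)
  qed
  ultimately show "u \<in> {prod x I | x. \<forall>i\<in>I. x i \<in> cantor_set}"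
    by blast
qed

theorem theorem2:
  shows "{(8/9::real)^3 .. 8/9} \<subseteq>
           {a * b * c * d | a b c d. a \<in> cantor_set \<and> b \<in> cantor_set \<and> c \<in> cantor_set \<and> d \<in> cantor_set}"
proof -
  have "{(8/9::real)^3 .. 8/9} \<subseteq> {(2/3) ^ card {..<4::nat} .. 1}"
    by (auto simp: eval_nat_numeral)
  also have "\<dots> \<subseteq> {prod x {..<4} | x. \<forall>i\<in>{..<4::nat}. x i \<in> cantor_set}"
    by (rule interval_subset_cantor_products) auto
  also have "\<dots> \<subseteq> {a * b * c * d | a b c d. a \<in> cantor_set \<and> b \<in> cantor_set \<and> c \<in> cantor_set \<and> d \<in> cantor_set}"
  proof clarify
    fix x :: "nat \<Rightarrow> real"
    assume "\<forall>i\<in>{..<4}. x i \<in> cantor_set"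
    then have "x 0 \<in> cantor_set" "x 1 \<in> cantor_set" "x 2 \<in> cantor_set" "x 3 \<in> cantor_set"
      by auto
    moreover have "prod x {..<4} = x 0 * x 1 * x 2 * x 3"
      by (simp add: eval_nat_numeral mult_ac)
    ultimately show "\<exists>a b c d. prod x {..<4} = a * b * c * d \<and>
        a \<in> cantor_set \<and> b \<in> cantor_set \<and> c \<in> cantor_set \<and> d \<in> cantor_set"
      by blast
  qed
  finally show ?thesis .
qed

end
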